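(* Let $E=\{z_1,\dots,z_n\}\subset\mathbb{R}^2$, $n\ge3$, with $z_i\,\mathcal{I}\,z_j$ for all $i\neq j$. For each of the variants Max-Min, Max-Sum, Max-Sum-Min, Max-Min-Sum and Max-Sum-Neighbor, the $3$-dispersion problem in $E$ is solvable in $O(n)$ time using $O(1)$ additional memory space.
   Context: For $y=(y^1,y^2),z=(z^1,z^2)\in\mathbb{R}^2$ write $y\prec z$ iff $y^1<z^1$ and $y^2>z^2$, and $y\,\mathcal{I}\,z$ iff $y\prec z$ or $z\prec y$. Fix $\alpha>0$ and let $d$ be the Euclidean distance. For $2\le p\le n$, let $D_p$ be the set of $p$-tuples $(w_1,\dots,w_p)\in E^p$ of pairwise distinct points, $\delta_{ij}=d(w_i,w_j)^\alpha$. The $p$-dispersion problems maximize over $D_p$: Max-Min: $\min_{1\le i<j\le p}\delta_{ij}$; Max-Sum: $\sum_{1\le i<j\le p}\delta_{ij}$; Max-Sum-Min: $\sum_{i=1}^p\min_{j\ne i}\delta_{ij}$; Max-Min-Sum: $\min_{1\le i\le p}\sum_{j\ne i}\delta_{ij}$. For Max-Sum-Neighbor, index $E$ as $x_1,\dots,x_n$ with increasing first coordinates and maximize $\sum_{j=1}^{p-1}d(x_{i_j},x_{i_{j+1}})^\alpha$ over $1\le i_1<\dots<i_p\le n$. Complexities are in a model where arithmetic operations, comparisons and evaluation of $d(\cdot,\cdot)^\alpha$ take $O(1)$ time; "additional memory space" excludes the input. *)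

theory Defs
  imports Complex_Main "HOL-Library.Multiset"
begin

type_synonym pt = "real \<times> real"

definition prec :: "pt \<Rightarrow> pt \<Rightarrow> bool" where
  "prec y z \<longleftrightarrow> fst y < fst z \<and> snd y > snd z"

definition incomp :: "pt \<Rightarrow> pt \<Rightarrow> bool" where
  "incomp y z \<longleftrightarrow> prec y z \<or> prec z y"

definition edist :: "pt \<Rightarrow> pt \<Rightarrow> real" where
  "edist y z = sqrt ((fst y - fst z)^2 + (snd y - snd z)^2)"

definition delta :: "real \<Rightarrow> pt \<Rightarrow> pt \<Rightarrow> real" where
  "delta \<alpha> y z = edist y z powr \<alpha>"

datatype variant = MaxMin | MaxSum | MaxSumMin | MaxMinSum | MaxSumNeighbor

fun objective :: "real \<Rightarrow> variant \<Rightarrow> pt list \<Rightarrow> real" where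
  "objective \<alpha> MaxMin ws =
     Min {delta \<alpha> (ws!i) (ws!j) | i j. i < j \<and> j < length ws}"
| "objective \<alpha> MaxSum ws =
     (\<Sum>j<length ws. \<Sum>i<j. delta \<alpha> (ws!i) (ws!j))"
| "objective \<alpha> MaxSumMin ws =
     (\<Sum>i<length ws. Min {delta \<alpha> (ws!i) (ws!j) | j. j < length ws \<and> j \<noteq> i})"
| "objective \<alpha> MaxMinSum ws =
     Min {(\<Sum>j\<in>{j. j < length ws \<and> j \<noteq> i}. delta \<alpha> (ws!i) (ws!j)) | i. i < length ws}"
| "objective \<alpha> MaxSumNeighbor ws =
     (let xs = sort_key fst ws in
      \<Sum>j<length xs - 1. delta \<alpha> (xs!j) (xs!Suc j))"

definition feasible :: "nat \<Rightarrow> pt list \<Rightarrow> pt list \<Rightarrow> bool" where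
  "feasible p E ws \<longleftrightarrow> length ws = p \<and> distinct ws \<and> set ws \<subseteq> set E"

text \<open>Real registers r_i, index (natural number) registers N_i.  The input is the
list E of points (read-only); arithmetic, comparisons and evaluation of
d(.,.)^alpha cost one step each.  A program uses only the finitely many registers
it mentions, hence O(1) additional memory.\<close>

datatype instr =
    RConst nat real
  | RAdd nat nat nat
  | RSub nat nat nat
  | RMul nat nat nat
  | RDiv nat nat nat
  | LoadX1 nat nat
  | LoadX2 nat nat
  | DistPow nat nat nat nat nat
  | NConst nat nat
  | NAdd nat nat nat
  | NSub nat nat nat
  | NLen nat
  | JmpRLe nat nat nat
  | JmpNLe nat nat nat
  | Goto nat
  | Halt

type_synonym state = "nat \<times> (nat \<Rightarrow> real) \<times> (nat \<Rightarrow> nat)"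

definition halted :: "instr list \<Rightarrow> state \<Rightarrow> bool" where
  "halted prog s \<longleftrightarrow> fst s \<ge> length prog \<or> prog ! fst s = Halt"

definition coord :: "(pt \<Rightarrow> real) \<Rightarrow> pt list \<Rightarrow> nat \<Rightarrow> real" where
  "coord f E k = (if k < length E then f (E ! k) else 0)"

fun exec :: "real \<Rightarrow> pt list \<Rightarrow> instr \<Rightarrow> state \<Rightarrow> state" where
  "exec \<alpha> E (RConst i c) (pc, r, m) = (Suc pc, r(i := c), m)"
| "exec \<alpha> E (RAdd i j k) (pc, r, m) = (Suc pc, r(i := r j + r k), m)"
| "exec \<alpha> E (RSub i j k) (pc, r, m) = (Suc pc, r(i := r j - r k), m)"
| "exec \<alpha> E (RMul i j k) (pc, r, m) = (Suc pc, r(i := r j * r k), m)"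
| "exec \<alpha> E (RDiv i j k) (pc, r, m) = (Suc pc, r(i := r j / r k), m)"
| "exec \<alpha> E (LoadX1 i j) (pc, r, m) = (Suc pc, r(i := coord fst E (m j)), m)"
| "exec \<alpha> E (LoadX2 i j) (pc, r, m) = (Suc pc, r(i := coord snd E (m j)), m)"
| "exec \<alpha> E (DistPow i a b c d) (pc, r, m) =
     (Suc pc, r(i := delta \<alpha> (r a, r b) (r c, r d)), m)"
| "exec \<alpha> E (NConst i c) (pc, r, m) = (Suc pc, r, m(i := c))"
| "exec \<alpha> E (NAdd i j k) (pc, r, m) = (Suc pc, r, m(i := m j + m k))"
| "exec \<alpha> E (NSub i j k) (pc, r, m) = (Suc pc, r, m(i := m j - m k))"
| "exec \<alpha> E (NLen i) (pc, r, m) = (Suc pc, r, m(i := length E))"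
| "exec \<alpha> E (JmpRLe j k l) (pc, r, m) = ((if r j \<le> r k then l else Suc pc), r, m)"
| "exec \<alpha> E (JmpNLe j k l) (pc, r, m) = ((if m j \<le> m k then l else Suc pc), r, m)"
| "exec \<alpha> E (Goto l) (pc, r, m) = (l, r, m)"
| "exec \<alpha> E Halt s = s"

definition step :: "real \<Rightarrow> pt list \<Rightarrow> instr list \<Rightarrow> state \<Rightarrow> state" where
  "step \<alpha> E prog s = (if halted prog s then s else exec \<alpha> E (prog ! fst s) s)"

definition init_state :: state where
  "init_state = (0, \<lambda>_. 0, \<lambda>_. 0)"

definition run :: "real \<Rightarrow> pt list \<Rightarrow> instr list \<Rightarrow> nat \<Rightarrow> state" where
  "run \<alpha> E prog k = (step \<alpha> E prog ^^ k) init_state"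

definition out_idx :: "state \<Rightarrow> nat list" where
  "out_idx s = (case s of (_, _, m) \<Rightarrow> [m 0, m 1, m 2])"

definition solves_3disp :: "real \<Rightarrow> variant \<Rightarrow> pt list \<Rightarrow> nat list \<Rightarrow> bool" where
  "solves_3disp \<alpha> v E is \<longleftrightarrow>
     distinct is \<and> (\<forall>i\<in>set is. i < length E) \<and>
     (\<forall>ws. feasible 3 E ws \<longrightarrow> objective \<alpha> v ws \<le> objective \<alpha> v (map ((!) E) is))"

end

theory Submission
  imports Defs
begin

(* Pairwise incomparable points form a staircase: sorted by first coordinate, their second
   coordinates decrease.  For staircase points p, q, r in this order, d(p,q) and d(q,r) are at
   most d(p,r), and each of these distances grows when an endpoint moves outward.  For all five
   objectives the value of such a triple is
     w_min * min (d(p,q), d(q,r)) + w_sum * (d(p,q) + d(q,r)) + w_outer * d(p,r)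
   with nonnegative weights, so replacing p by the leftmost point A and r by the rightmost
   point B of E never decreases it.  An optimal triple thus consists of A, B and a middle point
   maximising the first two terms, and a program with a constant number of registers finds
   them in two linear scans of E. *)

section \<open>Staircases\<close>

definition incomparable_set :: "pt set \<Rightarrow> bool" where
  "incomparable_set S \<longleftrightarrow> (\<forall>p\<in>S. \<forall>q\<in>S. p \<noteq> q \<longrightarrow> incomp p q)"

lemma incomp_fst_neq: "incomp p q \<Longrightarrow> fst p \<noteq> fst q"
  by (auto simp: incomp_def prec_def)

lemma incomparable_set_nth:
  assumes "\<forall>i j. i < length E \<and> j < length E \<and> i \<noteq> j \<longrightarrow> incomp (E!i) (E!j)"
  shows "incomparable_set (set E)" and "distinct E"
proof -
  show "incomparable_set (set E)"
    unfolding incomparable_set_def using assms by (metis in_set_conv_nth)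
  show "distinct E"
    unfolding distinct_conv_nth using assms incomp_fst_neq by metis
qed

lemma incomp_fst_le_imp_prec: "incomp p q \<Longrightarrow> fst p \<le> fst q \<Longrightarrow> prec p q"
  by (auto simp: incomp_def prec_def)

lemma incomparable_set_fst_inj:
  "incomparable_set S \<Longrightarrow> p \<in> S \<Longrightarrow> q \<in> S \<Longrightarrow> fst p = fst q \<Longrightarrow> p = q"
  unfolding incomparable_set_def using incomp_fst_neq by blast

lemma incomparable_set_snd_antimono:
  "incomparable_set S \<Longrightarrow> p \<in> S \<Longrightarrow> q \<in> S \<Longrightarrow> fst p \<le> fst q \<Longrightarrow> snd q \<le> snd p"
  unfolding incomparable_set_def
  by (metis incomp_fst_le_imp_prec prec_def less_imp_le order_refl)

lemma delta_commute: "delta \<alpha> p q = delta \<alpha> q p"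
  unfolding delta_def edist_def by (simp add: power2_commute)

lemma delta_nonneg: "0 \<le> delta \<alpha> p q"
  by (simp add: delta_def)

lemma delta_le_outer:
  assumes "0 \<le> \<alpha>" "fst p \<le> fst q" "fst q \<le> fst r" "snd r \<le> snd q" "snd q \<le> snd p"
  shows "delta \<alpha> p q \<le> delta \<alpha> p r" and "delta \<alpha> q r \<le> delta \<alpha> p r"
proof -
  have "(fst p - fst q)^2 \<le> (fst p - fst r)^2" "(snd p - snd q)^2 \<le> (snd p - snd r)^2"
    "(fst q - fst r)^2 \<le> (fst p - fst r)^2" "(snd q - snd r)^2 \<le> (snd p - snd r)^2"
    using assms by (simp_all add: power2_commute[of "fst p"] power2_commute[of _ "fst r"] power_mono)
  then have "edist p q \<le> edist p r" "edist q r \<le> edist p r"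
    unfolding edist_def by simp_all
  then show "delta \<alpha> p q \<le> delta \<alpha> p r" "delta \<alpha> q r \<le> delta \<alpha> p r"
    unfolding delta_def using assms(1) by (auto intro!: powr_mono2 simp: edist_def)
qed

lemma incomparable_set_delta_le_outer:
  assumes "0 \<le> \<alpha>" "incomparable_set S" "p \<in> S" "q \<in> S" "r \<in> S"
    and "fst p \<le> fst q" "fst q \<le> fst r"
  shows "delta \<alpha> p q \<le> delta \<alpha> p r" and "delta \<alpha> q r \<le> delta \<alpha> p r"
  using delta_le_outer[OF assms(1,6,7)] incomparable_set_snd_antimono[OF assms(2)] assms(3-7)
  by auto

section \<open>Objective values of a staircase triple\<close>

definition w_min :: "variant \<Rightarrow> real" where
  "w_min v = (case v of MaxMin \<Rightarrow> 1 | MaxSumMin \<Rightarrow> 1 | _ \<Rightarrow> 0)"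

definition w_sum :: "variant \<Rightarrow> real" where
  "w_sum v = (case v of MaxMin \<Rightarrow> 0 | _ \<Rightarrow> 1)"

definition w_outer :: "variant \<Rightarrow> real" where
  "w_outer v = (case v of MaxSum \<Rightarrow> 1 | _ \<Rightarrow> 0)"

lemma weights_nonneg: "0 \<le> w_min v" "0 \<le> w_sum v" "0 \<le> w_outer v"
  by (cases v; simp add: w_min_def w_sum_def w_outer_def)+

definition middle_score :: "real \<Rightarrow> variant \<Rightarrow> pt \<Rightarrow> pt \<Rightarrow> pt \<Rightarrow> real" where
  "middle_score \<alpha> v p q r =
     w_min v * min (delta \<alpha> p q) (delta \<alpha> q r) + w_sum v * (delta \<alpha> p q + delta \<alpha> q r)"

lemma middle_score_nonneg: "0 \<le> middle_score \<alpha> v p q r"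
  unfolding middle_score_def using weights_nonneg[of v] delta_nonneg
  by (simp add: add_nonneg_nonneg)

lemma middle_score_mono:
  assumes "delta \<alpha> p q \<le> delta \<alpha> p' q'" "delta \<alpha> q r \<le> delta \<alpha> q' r'"
  shows "middle_score \<alpha> v p q r \<le> middle_score \<alpha> v p' q' r'"
  unfolding middle_score_def using assms weights_nonneg[of v]
  by (intro add_mono mult_left_mono) auto

lemma objective_triple:
  "objective \<alpha> MaxMin [x, y, z] = min (delta \<alpha> x y) (min (delta \<alpha> x z) (delta \<alpha> y z))"
  "objective \<alpha> MaxSum [x, y, z] = delta \<alpha> x y + delta \<alpha> x z + delta \<alpha> y z"
  "objective \<alpha> MaxSumMin [x, y, z] =
     min (delta \<alpha> x y) (delta \<alpha> x z) + min (delta \<alpha> y x) (delta \<alpha> y z)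
     + min (delta \<alpha> z x) (delta \<alpha> z y)"
  "objective \<alpha> MaxMinSum [x, y, z] =
     min (delta \<alpha> x y + delta \<alpha> x z) (min (delta \<alpha> y x + delta \<alpha> y z) (delta \<alpha> z x + delta \<alpha> z y))"
proof -
  have three: "{f i j |i j. i < j \<and> j < Suc (Suc (Suc 0))} = {f 0 1, f 0 2, f 1 2}"
    "{g j |j. j < Suc (Suc (Suc 0)) \<and> j \<noteq> i} = g ` ({0, 1, 2} - {i})"
    "{j. j < Suc (Suc (Suc 0)) \<and> j \<noteq> i} = {0, 1, 2} - {i}"
    "{h i |i. i < Suc (Suc (Suc 0))} = {h 0, h 1, h (2::nat)}"
    for f :: "nat \<Rightarrow> nat \<Rightarrow> real" and g h :: "nat \<Rightarrow> real" and i
    by (auto simp: numeral_3_eq_3 numeral_2_eq_2 less_Suc_eq)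
  show "objective \<alpha> MaxMin [x, y, z] = min (delta \<alpha> x y) (min (delta \<alpha> x z) (delta \<alpha> y z))"
    by (simp add: three)
  show "objective \<alpha> MaxSum [x, y, z] = delta \<alpha> x y + delta \<alpha> x z + delta \<alpha> y z"
    by (simp add: numeral_3_eq_3 lessThan_Suc)
  show "objective \<alpha> MaxSumMin [x, y, z] =
     min (delta \<alpha> x y) (delta \<alpha> x z) + min (delta \<alpha> y x) (delta \<alpha> y z)
     + min (delta \<alpha> z x) (delta \<alpha> z y)"
    by (simp add: three numeral_3_eq_3 lessThan_Suc insert_Diff_if)
  show "objective \<alpha> MaxMinSum [x, y, z] =
     min (delta \<alpha> x y + delta \<alpha> x z) (min (delta \<alpha> y x + delta \<alpha> y z) (delta \<alpha> z x + delta \<alpha> z y))"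
    by (simp add: three insert_Diff_if)
qed

lemma obtain_sorted_triple:
  fixes f :: "'a \<Rightarrow> 'b::linorder"
  assumes "f x \<noteq> f y" "f y \<noteq> f z" "f x \<noteq> f z"
  obtains p q r where "f p < f q" "f q < f r"
    and "[x, y, z] \<in> {[p, q, r], [p, r, q], [q, p, r], [q, r, p], [r, p, q], [r, q, p]}"
proof -
  consider "f x < f y" "f y < f z" | "f x < f z" "f z < f y" | "f y < f x" "f x < f z"
    | "f y < f z" "f z < f x" | "f z < f x" "f x < f y" | "f z < f y" "f y < f x"
    using assms by (metis linorder_neqE less_trans)
  then show thesis
    by cases (blast intro: that)+
qed

lemma objective_permuted_sorted_triple:
  assumes "fst p < fst q" "fst q < fst r"
    and "delta \<alpha> p q \<le> delta \<alpha> p r" "delta \<alpha> q r \<le> delta \<alpha> p r"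
    and "ws \<in> {[p, q, r], [p, r, q], [q, p, r], [q, r, p], [r, p, q], [r, q, p]}"
  shows "objective \<alpha> v ws = middle_score \<alpha> v p q r + w_outer v * delta \<alpha> p r"
proof (cases v)
  case MaxSumNeighbor
  with assms show ?thesis
    by (auto simp: middle_score_def w_min_def w_sum_def w_outer_def lessThan_Suc)
qed (use assms(3-5) in \<open>auto simp del: objective.simps simp: objective_triple delta_commute[of \<alpha> q p]
      delta_commute[of \<alpha> r p] delta_commute[of \<alpha> r q] middle_score_def
      w_min_def w_sum_def w_outer_def min_def\<close>)

lemma objective_le_leftmost_best_middle_rightmost:
  assumes "0 \<le> \<alpha>" and S: "incomparable_set S"
    and AB: "A \<in> S" "B \<in> S" and extremes: "\<forall>t\<in>S. fst A \<le> fst t \<and> fst t \<le> fst B"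
    and q: "q \<in> S" "q \<noteq> A" "q \<noteq> B"
    and best: "\<forall>t\<in>S. t \<noteq> A \<longrightarrow> t \<noteq> B \<longrightarrow> middle_score \<alpha> v A t B \<le> middle_score \<alpha> v A q B"
    and ws: "distinct ws" "length ws = 3" "set ws \<subseteq> S"
  shows "objective \<alpha> v ws \<le> objective \<alpha> v [A, q, B]"
proof -
  note fst_inj = incomparable_set_fst_inj[OF S]
  note le_outer = incomparable_set_delta_le_outer[OF assms(1) S]
  have strictly_inside: "fst A < fst t \<and> fst t < fst B" if "t \<in> S" "t \<noteq> A" "t \<noteq> B" for t
    using extremes fst_inj[of A t] fst_inj[of t B] AB that by force
  obtain x y z where xyz: "ws = [x, y, z]"
    using ws(2) by (auto simp: numeral_3_eq_3 length_Suc_conv)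
  have "x \<in> S" "y \<in> S" "z \<in> S" "x \<noteq> y" "y \<noteq> z" "x \<noteq> z"
    using ws unfolding xyz by auto
  then have "fst x \<noteq> fst y" "fst y \<noteq> fst z" "fst x \<noteq> fst z"
    using fst_inj by metis+
  then obtain p p' r where sorted: "fst p < fst p'" "fst p' < fst r"
    and perm: "ws \<in> {[p, p', r], [p, r, p'], [p', p, r], [p', r, p], [r, p, p'], [r, p', p]}"
    unfolding xyz by (rule obtain_sorted_triple)
  have in_S: "p \<in> S" "p' \<in> S" "r \<in> S"
    using perm ws(3) by auto
  have "fst A \<le> fst p" "fst r \<le> fst B"
    using extremes in_S by auto
  then have p': "p' \<noteq> A" "p' \<noteq> B"
    using sorted by auto
  have "objective \<alpha> v ws = middle_score \<alpha> v p p' r + w_outer v * delta \<alpha> p r"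
    using sorted le_outer[of p p' r] in_S perm by (intro objective_permuted_sorted_triple) auto
  also have "\<dots> \<le> middle_score \<alpha> v A p' B + w_outer v * delta \<alpha> A B"
  proof (intro add_mono mult_left_mono middle_score_mono)
    show "delta \<alpha> p p' \<le> delta \<alpha> A p'" "delta \<alpha> p' r \<le> delta \<alpha> p' B"
      using le_outer[of A p p'] le_outer[of p' r B] extremes sorted in_S AB by auto
    have "delta \<alpha> p r \<le> delta \<alpha> A r"
      using le_outer[of A p r] extremes sorted in_S AB by auto
    also have "\<dots> \<le> delta \<alpha> A B"
      using le_outer[of A r B] extremes in_S AB by auto
    finally show "delta \<alpha> p r \<le> delta \<alpha> A B" .
  qed (simp add: weights_nonneg)
  also have "\<dots> \<le> middle_score \<alpha> v A q B + w_outer v * delta \<alpha> A B"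
    using best in_S p' by auto
  also have "\<dots> = objective \<alpha> v [A, q, B]"
    using strictly_inside[OF q] le_outer[of A q B] q AB
    by (intro objective_permuted_sorted_triple[symmetric]) auto
  finally show ?thesis .
qed

definition leftmost_rightmost_upto :: "pt list \<Rightarrow> nat \<Rightarrow> nat \<Rightarrow> nat \<Rightarrow> bool" where
  "leftmost_rightmost_upto E i a b \<longleftrightarrow>
     a < i \<and> b < i \<and> (\<forall>t<i. fst (E!a) \<le> fst (E!t) \<and> fst (E!t) \<le> fst (E!b))"

definition best_middle_upto ::
  "real \<Rightarrow> variant \<Rightarrow> pt list \<Rightarrow> nat \<Rightarrow> nat \<Rightarrow> nat \<Rightarrow> nat \<Rightarrow> bool" where
  "best_middle_upto \<alpha> v E a b i j \<longleftrightarrow> j < i \<and> j \<noteq> a \<and> j \<noteq> b \<and>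
     (\<forall>t<i. t \<noteq> a \<longrightarrow> t \<noteq> b \<longrightarrow>
        middle_score \<alpha> v (E!a) (E!t) (E!b) \<le> middle_score \<alpha> v (E!a) (E!j) (E!b))"

lemma best_middle_upto_Suc_skip:
  "i = a \<or> i = b \<Longrightarrow> best_middle_upto \<alpha> v E a b (Suc i) j \<longleftrightarrow> best_middle_upto \<alpha> v E a b i j"
  by (auto simp: best_middle_upto_def less_Suc_eq)

lemma best_middle_upto_Suc_keep:
  "best_middle_upto \<alpha> v E a b i j \<Longrightarrow>
   middle_score \<alpha> v (E!a) (E!i) (E!b) \<le> middle_score \<alpha> v (E!a) (E!j) (E!b) \<Longrightarrow>
   best_middle_upto \<alpha> v E a b (Suc i) j"
  by (auto simp: best_middle_upto_def less_Suc_eq)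

lemma best_middle_upto_Suc_new:
  "i \<noteq> a \<Longrightarrow> i \<noteq> b \<Longrightarrow>
   (\<forall>t<i. t \<noteq> a \<longrightarrow> t \<noteq> b \<longrightarrow>
      middle_score \<alpha> v (E!a) (E!t) (E!b) \<le> middle_score \<alpha> v (E!a) (E!i) (E!b)) \<Longrightarrow>
   best_middle_upto \<alpha> v E a b (Suc i) i"
  by (auto simp: best_middle_upto_def less_Suc_eq)

lemma solves_3disp_leftmost_best_middle_rightmost:
  assumes "0 \<le> \<alpha>"
    and incomp: "\<forall>i j. i < length E \<and> j < length E \<and> i \<noteq> j \<longrightarrow> incomp (E!i) (E!j)"
    and ab: "leftmost_rightmost_upto E (length E) a b"
    and j: "best_middle_upto \<alpha> v E a b (length E) j"
  shows "solves_3disp \<alpha> v E [a, j, b]"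
proof -
  note S = incomparable_set_nth[OF incomp]
  have extremes: "\<forall>t\<in>set E. fst (E!a) \<le> fst t \<and> fst t \<le> fst (E!b)"
    using ab unfolding leftmost_rightmost_upto_def by (metis in_set_conv_nth)
  have best: "\<forall>t\<in>set E. t \<noteq> E!a \<longrightarrow> t \<noteq> E!b \<longrightarrow>
      middle_score \<alpha> v (E!a) t (E!b) \<le> middle_score \<alpha> v (E!a) (E!j) (E!b)"
    using j unfolding best_middle_upto_def by (metis in_set_conv_nth)
  have in_E: "E!a \<in> set E" "E!b \<in> set E" "E!j \<in> set E"
    using ab j by (auto simp: leftmost_rightmost_upto_def best_middle_upto_def)
  have middle: "E!j \<noteq> E!a" "E!j \<noteq> E!b"
    using ab j S(2) by (auto simp: leftmost_rightmost_upto_def best_middle_upto_def nth_eq_iff_index_eq)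
  have "a \<noteq> b"
  proof
    assume "a = b"
    then have "fst (E!j) = fst (E!a)"
      using extremes in_E by force
    then show False
      using incomparable_set_fst_inj[OF S(1)] in_E middle by blast
  qed
  then show ?thesis
    unfolding solves_3disp_def feasible_def
    using ab j objective_le_leftmost_best_middle_rightmost[OF assms(1) S(1) in_E(1,2) extremes in_E(3) middle best]
    by (auto simp: leftmost_rightmost_upto_def best_middle_upto_def)
qed

section \<open>Bounded reachability\<close>

definition reaches ::
  "real \<Rightarrow> pt list \<Rightarrow> instr list \<Rightarrow> state \<Rightarrow> nat \<Rightarrow> nat \<Rightarrow> (state \<Rightarrow> bool) \<Rightarrow> bool" where
  "reaches \<alpha> E prog s K pc Q \<longleftrightarrow>
     (\<exists>k\<le>K. fst ((step \<alpha> E prog ^^ k) s) = pc \<and> Q ((step \<alpha> E prog ^^ k) s))"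

lemma reaches_here: "fst s = pc \<Longrightarrow> Q s \<Longrightarrow> reaches \<alpha> E prog s K pc Q"
  unfolding reaches_def by (intro exI[of _ 0]) auto

lemma reaches_first_step:
  assumes "0 < K" "reaches \<alpha> E prog (step \<alpha> E prog s) (K - 1) pc Q"
  shows "reaches \<alpha> E prog s K pc Q"
proof -
  obtain k where "k \<le> K - 1" "fst ((step \<alpha> E prog ^^ k) (step \<alpha> E prog s)) = pc"
    "Q ((step \<alpha> E prog ^^ k) (step \<alpha> E prog s))"
    using assms(2) unfolding reaches_def by blast
  then show ?thesis
    unfolding reaches_def using assms(1) by (intro exI[of _ "Suc k"]) (simp add: funpow_swap1)
qed

lemma reaches_Suc:
  assumes "fst s \<noteq> pc"
  shows "reaches \<alpha> E prog s (Suc K) pc Q \<longleftrightarrow> reaches \<alpha> E prog (step \<alpha> E prog s) K pc Q"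
proof
  assume "reaches \<alpha> E prog s (Suc K) pc Q"
  then obtain k where k: "k \<le> Suc K" "fst ((step \<alpha> E prog ^^ k) s) = pc"
    "Q ((step \<alpha> E prog ^^ k) s)"
    unfolding reaches_def by blast
  with assms obtain k' where "k = Suc k'"
    by (cases k) auto
  with k show "reaches \<alpha> E prog (step \<alpha> E prog s) K pc Q"
    unfolding reaches_def by (intro exI[of _ k']) (simp add: funpow_swap1)
qed (rule reaches_first_step, simp_all)

lemma reaches_mono: "reaches \<alpha> E prog s K pc Q \<Longrightarrow> K \<le> K' \<Longrightarrow> reaches \<alpha> E prog s K' pc Q"
  unfolding reaches_def using order_trans by blast

lemma reaches_trans:
  assumes "reaches \<alpha> E prog s K pc P"
    and "\<And>s'. fst s' = pc \<Longrightarrow> P s' \<Longrightarrow> reaches \<alpha> E prog s' K' pc' Q"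
  shows "reaches \<alpha> E prog s (K + K') pc' Q"
proof -
  obtain k where k: "k \<le> K" "fst ((step \<alpha> E prog ^^ k) s) = pc" "P ((step \<alpha> E prog ^^ k) s)"
    using assms(1) unfolding reaches_def by blast
  then obtain k' where "k' \<le> K'" "fst ((step \<alpha> E prog ^^ k') ((step \<alpha> E prog ^^ k) s)) = pc'"
    "Q ((step \<alpha> E prog ^^ k') ((step \<alpha> E prog ^^ k) s))"
    using assms(2) unfolding reaches_def by blast
  with k(1) show ?thesis
    unfolding reaches_def by (intro exI[of _ "k' + k"]) (simp add: funpow_add)
qed

lemma reaches_loop:
  assumes body: "\<And>i s. fst s = pc \<Longrightarrow> I i s \<Longrightarrow> i < n \<Longrightarrow> reaches \<alpha> E prog s K pc (I (Suc i))"
  shows "fst s = pc \<Longrightarrow> I i s \<Longrightarrow> i \<le> n \<Longrightarrow> reaches \<alpha> E prog s (K * (n - i)) pc (I n)"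
proof (induction "n - i" arbitrary: i s)
  case 0
  then show ?case by (simp add: reaches_here)
next
  case (Suc d)
  then have "i < n"
    by simp
  have "reaches \<alpha> E prog s (K + K * (n - Suc i)) pc (I n)"
  proof (rule reaches_trans[OF body[OF Suc.prems(1,2) \<open>i < n\<close>]])
    fix s' assume "fst s' = pc" "I (Suc i) s'"
    with Suc.hyps(2) \<open>i < n\<close> show "reaches \<alpha> E prog s' (K * (n - Suc i)) pc (I n)"
      by (intro Suc.hyps(1)) simp_all
  qed
  with \<open>i < n\<close> show ?case
    by (simp add: mult_Suc_right[symmetric] Suc_diff_Suc)
qed

(* Symbolic execution rewrites with the next three rules.  They fire only on states whose
   program counter is given explicitly, so an undecided jump condition stops the unrolling at
   an if-state, which is then split, instead of nesting ever longer conditional runs. *)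

lemma reaches_Suc_at:
  "l \<noteq> pc \<Longrightarrow>
   reaches \<alpha> E prog (l, r, m) (Suc K) pc Q \<longleftrightarrow> reaches \<alpha> E prog (step \<alpha> E prog (l, r, m)) K pc Q"
  by (simp add: reaches_Suc)

lemma reaches_numeral_at:
  "l \<noteq> pc \<Longrightarrow>
   reaches \<alpha> E prog (l, r, m) (numeral K) pc Q \<longleftrightarrow>
   reaches \<alpha> E prog (step \<alpha> E prog (l, r, m)) (pred_numeral K) pc Q"
  by (simp add: numeral_eq_Suc reaches_Suc)

lemma reaches_if_at:
  "reaches \<alpha> E prog (if c then l1 else l2, r, m) K pc Q \<longleftrightarrow>
   (if c then reaches \<alpha> E prog (l1, r, m) K pc Q else reaches \<alpha> E prog (l2, r, m) K pc Q)"
  by simp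

section \<open>The two-scan program\<close>

(* Register use: N0 and N2 hold the indices of the leftmost and rightmost point found so far,
   N1 the best middle point, N3 the loop counter i, N4 = n, N5 = 1 and N7 = 0; r20 = 0 serves to
   copy real registers (r_i := r_j + r20).  The first loop (pc 5-14) keeps the first coordinates
   of the two extreme points in r0 and r1.  The second loop (pc 23-46) skips i = N0 and i = N2,
   computes the middle score of E!i in r15 from r13 = d(A, E!i)^alpha, r14 = d(E!i, B)^alpha and
   the weights r21 = w_min, r22 = w_sum, and keeps the best score in r5, which starts at -1,
   below every score. *)
definition dispersion3_program :: "variant \<Rightarrow> instr list" where
  "dispersion3_program v =
    [NConst 5 1, NLen 4, LoadX1 0 0, LoadX1 1 0, NConst 3 1,
     JmpNLe 4 3 15, LoadX1 2 3, JmpRLe 0 2 10, NAdd 0 3 7, RAdd 0 2 20,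
     JmpRLe 2 1 13, NAdd 2 3 7, RAdd 1 2 20, NAdd 3 3 5, Goto 5,
     NConst 3 0, RConst 5 (-1), RConst 21 (w_min v), RConst 22 (w_sum v),
     LoadX1 6 0, LoadX2 7 0, LoadX1 8 2, LoadX2 9 2,
     JmpNLe 4 3 47, JmpNLe 3 0 26, Goto 27, JmpNLe 0 3 45,
     JmpNLe 3 2 29, Goto 30, JmpNLe 2 3 45,
     LoadX1 11 3, LoadX2 12 3, DistPow 13 6 7 11 12, DistPow 14 11 12 8 9,
     JmpRLe 13 14 37, RAdd 16 14 20, Goto 38, RAdd 16 13 20,
     RAdd 17 13 14, RMul 18 21 16, RMul 19 22 17, RAdd 15 18 19,
     JmpRLe 15 5 45, RAdd 5 15 20, NAdd 1 3 7, NAdd 3 3 5, Goto 23, Halt]"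

lemma dispersion3_program_length: "length (dispersion3_program v) = 48"
  by (simp add: dispersion3_program_def)

lemmas dispersion3_program_nth =
  arg_cong[where f = "\<lambda>p. p ! 0", OF dispersion3_program_def]
  arg_cong[where f = "\<lambda>p. p ! Suc k" for k, OF dispersion3_program_def]
  arg_cong[where f = "\<lambda>p. p ! numeral k" for k, OF dispersion3_program_def]

lemmas symbolic_execution = reaches_Suc_at reaches_numeral_at reaches_if_at step_def halted_def
  dispersion3_program_length dispersion3_program_nth coord_def

definition extremes_scan_inv :: "pt list \<Rightarrow> nat \<Rightarrow> state \<Rightarrow> bool" where
  "extremes_scan_inv E i s \<longleftrightarrow> (case s of (_, r, m) \<Rightarrow>
     m 3 = i \<and> m 4 = length E \<and> m 5 = 1 \<and> m 7 = 0 \<and> r 20 = 0 \<and>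
     leftmost_rightmost_upto E i (m 0) (m 2) \<and> r 0 = fst (E ! m 0) \<and> r 1 = fst (E ! m 2))"

lemma extremes_scan_start:
  "0 < length E \<Longrightarrow> reaches \<alpha> E (dispersion3_program v) init_state 5 5 (extremes_scan_inv E 1)"
  by (simp add: init_state_def symbolic_execution reaches_here extremes_scan_inv_def
      leftmost_rightmost_upto_def)

lemma extremes_scan_step:
  assumes "fst s = 5" "extremes_scan_inv E i s" "i < length E"
  shows "reaches \<alpha> E (dispersion3_program v) s 10 5 (extremes_scan_inv E (Suc i))"
proof -
  obtain r m where s: "s = (5, r, m)"
    using assms(1) by (cases s) auto
  have regs: "m 3 = i" "m 4 = length E" "m 5 = 1" "m 7 = 0" "r 20 = 0"
    and inv: "leftmost_rightmost_upto E i (m 0) (m 2)" "r 0 = fst (E ! m 0)" "r 1 = fst (E ! m 2)"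
    using assms(2) by (simp_all add: s extremes_scan_inv_def)
  show ?thesis
    unfolding s
    apply (rule reaches_first_step)
    using regs assms(3) apply (simp_all add: symbolic_execution)
    apply (intro conjI impI; rule reaches_here)
    using regs inv assms(3)
       apply (auto simp: extremes_scan_inv_def leftmost_rightmost_upto_def less_Suc_eq)
    done
qed

definition middle_scan_inv :: "real \<Rightarrow> variant \<Rightarrow> pt list \<Rightarrow> nat \<Rightarrow> state \<Rightarrow> bool" where
  "middle_scan_inv \<alpha> v E i s \<longleftrightarrow> (case s of (_, r, m) \<Rightarrow>
     m 3 = i \<and> m 4 = length E \<and> m 5 = 1 \<and> m 7 = 0 \<and> r 20 = 0 \<and>
     r 21 = w_min v \<and> r 22 = w_sum v \<and>
     leftmost_rightmost_upto E (length E) (m 0) (m 2) \<and>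
     (r 6, r 7) = E ! m 0 \<and> (r 8, r 9) = E ! m 2 \<and>
     ((\<forall>t<i. t = m 0 \<or> t = m 2) \<and> r 5 = -1 \<or>
      best_middle_upto \<alpha> v E (m 0) (m 2) i (m 1) \<and>
      r 5 = middle_score \<alpha> v (E ! m 0) (E ! m 1) (E ! m 2)))"

lemma extremes_scan_exit:
  assumes "fst s = 5" "extremes_scan_inv E (length E) s"
  shows "reaches \<alpha> E (dispersion3_program v) s 9 23 (middle_scan_inv \<alpha> v E 0)"
proof -
  obtain r m where s: "s = (5, r, m)"
    using assms(1) by (cases s) auto
  have regs: "m 3 = length E" "m 4 = length E" "m 5 = 1" "m 7 = 0" "r 20 = 0"
    and ext: "leftmost_rightmost_upto E (length E) (m 0) (m 2)"
    using assms(2) by (simp_all add: s extremes_scan_inv_def)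
  then have "m 0 < length E" "m 2 < length E"
    by (simp_all add: leftmost_rightmost_upto_def)
  with regs show ?thesis
    unfolding s
    apply (simp add: symbolic_execution)
    apply (rule reaches_here)
    using regs ext apply (auto simp: middle_scan_inv_def leftmost_rightmost_upto_def)
    done
qed

lemma middle_scan_inv_Suc_skip:
  assumes "middle_scan_inv \<alpha> v E i (pc, r, m)" "i = m 0 \<or> i = m 2"
  shows "middle_scan_inv \<alpha> v E (Suc i) (pc', r, m(3 := Suc i))"
proof -
  have "(\<forall>t<Suc i. t = m 0 \<or> t = m 2) \<longleftrightarrow> (\<forall>t<i. t = m 0 \<or> t = m 2)"
    using assms(2) less_Suc_eq by auto
  then show ?thesis
    using assms by (simp add: middle_scan_inv_def best_middle_upto_Suc_skip)
qed

lemma middle_scan_step_skip: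
  assumes inv: "middle_scan_inv \<alpha> v E i (23, r, m)" and "i < length E" "i = m 0 \<or> i = m 2"
  shows "reaches \<alpha> E (dispersion3_program v) (23, r, m) 25 23 (middle_scan_inv \<alpha> v E (Suc i))"
proof -
  have "m 3 = i" "m 4 = length E" "m 5 = 1"
    using inv by (simp_all add: middle_scan_inv_def)
  with assms(2,3) show ?thesis
    apply -
    apply (rule reaches_first_step)
     apply (simp_all add: symbolic_execution)
    apply (intro conjI impI; rule reaches_here)
    using middle_scan_inv_Suc_skip[OF inv, of 23] assms(3) by auto
qed

lemma middle_scan_inv_Suc_score:
  assumes inv: "middle_scan_inv \<alpha> v E i (pc, r, m)" and i: "i \<noteq> m 0" "i \<noteq> m 2"
    and regs: "\<forall>k\<in>{6, 7, 8, 9, 20, 21, 22}. r' k = r k"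
    and update: "if middle_score \<alpha> v (E ! m 0) (E ! i) (E ! m 2) \<le> r 5
      then r' 5 = r 5 \<and> m' = m(3 := Suc i)
      else r' 5 = middle_score \<alpha> v (E ! m 0) (E ! i) (E ! m 2) \<and> m' = m(1 := i, 3 := Suc i)"
  shows "middle_scan_inv \<alpha> v E (Suc i) (pc', r', m')"
proof -
  let ?score = "\<lambda>t. middle_score \<alpha> v (E ! m 0) (E ! t) (E ! m 2)"
  have best: "(\<forall>t<i. t = m 0 \<or> t = m 2) \<and> r 5 = -1 \<or>
      best_middle_upto \<alpha> v E (m 0) (m 2) i (m 1) \<and> r 5 = ?score (m 1)"
    using inv by (simp add: middle_scan_inv_def)
  have "best_middle_upto \<alpha> v E (m 0) (m 2) (Suc i) (m' 1) \<and> r' 5 = ?score (m' 1)"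
  proof (cases "?score i \<le> r 5")
    case True
    with best middle_score_nonneg[of \<alpha> v "E ! m 0" "E ! i" "E ! m 2"]
    have "best_middle_upto \<alpha> v E (m 0) (m 2) i (m 1)" "r 5 = ?score (m 1)"
      by auto
    with True update show ?thesis
      by (simp add: best_middle_upto_Suc_keep)
  next
    case False
    with best have "\<forall>t<i. t \<noteq> m 0 \<longrightarrow> t \<noteq> m 2 \<longrightarrow> ?score t \<le> ?score i"
      by (auto simp: best_middle_upto_def)
    with False update i show ?thesis
      by (simp add: best_middle_upto_Suc_new)
  qed
  moreover have "m' 0 = m 0" "m' 2 = m 2" "m' 3 = Suc i" "\<forall>k\<in>{4, 5, 7}. m' k = m k"
    using update by (auto split: if_splits)
  ultimately show ?thesis
    using inv regs by (auto simp: middle_scan_inv_def)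
qed

lemma middle_scan_step_score:
  assumes inv: "middle_scan_inv \<alpha> v E i (23, r, m)" and "i < length E" and i: "i \<noteq> m 0" "i \<noteq> m 2"
  shows "reaches \<alpha> E (dispersion3_program v) (23, r, m) 25 23 (middle_scan_inv \<alpha> v E (Suc i))"
proof -
  have "m 3 = i" "m 4 = length E" "m 5 = 1" "m 7 = 0" "r 20 = 0" "r 21 = w_min v" "r 22 = w_sum v"
    "(r 6, r 7) = E ! m 0" "(r 8, r 9) = E ! m 2"
    using inv by (simp_all add: middle_scan_inv_def)
  with assms(2) i show ?thesis
    apply -
    apply (rule reaches_first_step)
     apply (simp_all add: symbolic_execution)
    apply (intro conjI impI;
        rule reaches_here, simp, rule middle_scan_inv_Suc_score[OF inv i])
    apply (simp_all add: middle_score_def min_def)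
    done
qed

lemma middle_scan_step:
  assumes "fst s = 23" "middle_scan_inv \<alpha> v E i s" "i < length E"
  shows "reaches \<alpha> E (dispersion3_program v) s 25 23 (middle_scan_inv \<alpha> v E (Suc i))"
proof -
  obtain r m where s: "s = (23, r, m)"
    using assms(1) by (cases s) auto
  show ?thesis
    using assms(2,3) middle_scan_step_skip middle_scan_step_score unfolding s by blast
qed

definition holds_optimal_triple :: "real \<Rightarrow> variant \<Rightarrow> pt list \<Rightarrow> state \<Rightarrow> bool" where
  "holds_optimal_triple \<alpha> v E s \<longleftrightarrow> (case s of (_, _, m) \<Rightarrow>
     leftmost_rightmost_upto E (length E) (m 0) (m 2) \<and>
     best_middle_upto \<alpha> v E (m 0) (m 2) (length E) (m 1))"

lemma middle_scan_exit:
  assumes "fst s = 23" "middle_scan_inv \<alpha> v E (length E) s" "3 \<le> length E"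
  shows "reaches \<alpha> E (dispersion3_program v) s 1 47 (holds_optimal_triple \<alpha> v E)"
proof -
  obtain r m where s: "s = (23, r, m)"
    using assms(1) by (cases s) auto
  have regs: "m 3 = length E" "m 4 = length E"
    and ab: "leftmost_rightmost_upto E (length E) (m 0) (m 2)"
    and best: "(\<forall>t<length E. t = m 0 \<or> t = m 2) \<and> r 5 = -1 \<or>
      best_middle_upto \<alpha> v E (m 0) (m 2) (length E) (m 1)"
    using assms(2) by (auto simp: s middle_scan_inv_def)
  have "\<not> (\<forall>t<length E. t = m 0 \<or> t = m 2)"
  proof
    assume all: "\<forall>t<length E. t = m 0 \<or> t = m 2"
    have "(0::nat) < length E" "(1::nat) < length E" "(2::nat) < length E"
      using assms(3) by auto
    then have "(0::nat) \<in> {m 0, m 2}" "(1::nat) \<in> {m 0, m 2}" "(2::nat) \<in> {m 0, m 2}"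
      using all by blast+
    then show False
      by auto
  qed
  with best have "best_middle_upto \<alpha> v E (m 0) (m 2) (length E) (m 1)"
    by blast
  with regs ab show ?thesis
    unfolding s by (simp add: symbolic_execution reaches_here holds_optimal_triple_def)
qed

lemma dispersion3_program_correct:
  assumes "3 \<le> length E"
  shows "reaches \<alpha> E (dispersion3_program v) init_state (40 * length E) 47 (holds_optimal_triple \<alpha> v E)"
proof -
  let ?n = "length E"
  have start: "reaches \<alpha> E (dispersion3_program v) init_state 5 5 (extremes_scan_inv E 1)"
    using assms by (intro extremes_scan_start) auto
  have scan1: "reaches \<alpha> E (dispersion3_program v) s (10 * (?n - 1)) 5 (extremes_scan_inv E ?n)"
    if "fst s = 5" "extremes_scan_inv E 1 s" for s
    using that assms by (intro reaches_loop[where I = "extremes_scan_inv E", OF extremes_scan_step]) auto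
  have scan2: "reaches \<alpha> E (dispersion3_program v) s (25 * (?n - 0)) 23 (middle_scan_inv \<alpha> v E ?n)"
    if "fst s = 23" "middle_scan_inv \<alpha> v E 0 s" for s
    using that by (intro reaches_loop[where I = "middle_scan_inv \<alpha> v E", OF middle_scan_step]) auto
  have "reaches \<alpha> E (dispersion3_program v) init_state
      (5 + (10 * (?n - 1) + (9 + (25 * (?n - 0) + 1)))) 47 (holds_optimal_triple \<alpha> v E)"
    apply (rule reaches_trans[OF start])
    apply (rule reaches_trans[OF scan1], assumption+)
    apply (rule reaches_trans[OF extremes_scan_exit], assumption+)
    apply (rule reaches_trans[OF scan2], assumption+)
    apply (rule middle_scan_exit, assumption+, rule assms)
    done
  then show ?thesis
    by (rule reaches_mono) (use assms in simp)
qed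

lemma dispersion3_program_solves:
  assumes "0 \<le> \<alpha>" and "3 \<le> length E"
    and incomp: "\<forall>i j. i < length E \<and> j < length E \<and> i \<noteq> j \<longrightarrow> incomp (E!i) (E!j)"
  shows "\<exists>k \<le> 40 * length E. halted (dispersion3_program v) (run \<alpha> E (dispersion3_program v) k) \<and>
    solves_3disp \<alpha> v E (out_idx (run \<alpha> E (dispersion3_program v) k))"
proof -
  obtain k where k: "k \<le> 40 * length E" "fst (run \<alpha> E (dispersion3_program v) k) = 47"
    and answer: "holds_optimal_triple \<alpha> v E (run \<alpha> E (dispersion3_program v) k)"
    using dispersion3_program_correct[OF assms(2)] unfolding reaches_def run_def by blast
  obtain r m where run: "run \<alpha> E (dispersion3_program v) k = (47, r, m)"
    using k(2) by (cases "run \<alpha> E (dispersion3_program v) k") auto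
  have "solves_3disp \<alpha> v E [m 0, m 1, m 2]"
    using solves_3disp_leftmost_best_middle_rightmost[OF assms(1) incomp] answer
    by (simp add: run holds_optimal_triple_def)
  with k run show ?thesis
    by (auto simp: halted_def out_idx_def dispersion3_program_nth)
qed

theorem proposition6:
  fixes \<alpha> :: real
  assumes "\<alpha> > 0"
  shows "\<forall>v :: variant. \<exists>(prog :: instr list) (c :: nat).
     \<forall>E :: pt list.
       length E \<ge> 3 \<and>
       (\<forall>i j. i < length E \<and> j < length E \<and> i \<noteq> j \<longrightarrow> incomp (E!i) (E!j))
       \<longrightarrow> (\<exists>k \<le> c * length E.
              halted prog (run \<alpha> E prog k) \<and>
              solves_3disp \<alpha> v E (out_idx (run \<alpha> E prog k)))"
  using dispersion3_program_solves[OF less_imp_le[OF assms]] by blast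

end
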